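(* Let $h_6$ be the real two-photon Lie algebra. A Lie bialgebra structure $\delta$ on $h_6$ satisfies $\delta(A_+)=0$ if and only if there exist real numbers $a_1,a_3,a_4,a_5,b_3,c_1$ with $$a_1a_4+a_5c_1=0$$ such that $\delta(X)=[1\otimes X+X\otimes 1,\,r]$ for all $X\in h_6$, where $$r=a_1\,N\wedge A_++a_3\,A_+\wedge M+a_4\,B_+\wedge M+a_5\,A_+\wedge B_++b_3\,A_-\wedge M+c_1\,(N\wedge M-A_+\wedge A_-).$$ Explicitly, $\delta(A_+)=\delta(M)=0$ and $\delta(N)=a_1N\wedge A_++a_3A_+\wedge M+2a_4B_+\wedge M+3a_5A_+\wedge B_+-b_3A_-\wedge M$, $\delta(A_-)=a_1(N\wedge M-A_+\wedge A_-)+2a_4A_+\wedge M-a_5B_+\wedge M+2c_1A_-\wedge M$, $\delta(B_+)=2a_1A_+\wedge B_+-2b_3A_+\wedge M-2c_1B_+\wedge M$, $\delta(B_-)=2a_1(N\wedge A_--A_+\wedge B_-)+2a_3A_-\wedge M+4a_4N\wedge M-2a_5(2N\wedge A_+-A_-\wedge B_+-A_+\wedge M)+2c_1B_-\wedge M$. Moreover, $r$ satisfies the classical Yang–Baxter equation $[[r,r]]=0$ (non-standard case) if and only if $a_1b_3-c_1^2=0$, and otherwise it is standard.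
   Context: The two-photon Lie algebra $h_6$ is the real Lie algebra with basis $\{N,A_+,A_-,B_+,B_-,M\}$ and brackets $[N,A_+]=A_+$, $[N,A_-]=-A_-$, $[A_-,A_+]=M$, $[N,B_+]=2B_+$, $[N,B_-]=-2B_-$, $[B_-,B_+]=4N+2M$, $[A_+,B_-]=-2A_-$, $[A_+,B_+]=0$, $[A_-,B_+]=2A_+$, $[A_-,B_-]=0$, and $M$ central. A Lie bialgebra structure on a Lie algebra $g$ is a linear map $\delta:g\to g\otimes g$ which is a 1-cocycle, i.e. $\delta([X,Y])=[\delta(X),1\otimes Y+Y\otimes 1]+[1\otimes X+X\otimes 1,\delta(Y)]$, and whose dual map $g^*\otimes g^*\to g^*$ is a Lie bracket. For $r=\sum r^{ij}X_i\otimes X_j\in g\wedge g$, the Schouten bracket is $[[r,r]]=[r_{12},r_{13}]+[r_{12},r_{23}]+[r_{13},r_{23}]$ with $r_{12}=\sum r^{ij}X_i\otimes X_j\otimes 1$, $r_{13}=\sum r^{ij}X_i\otimes 1\otimes X_j$, $r_{23}=\sum r^{ij}1\otimes X_i\otimes X_j$. Here $X\wedge Y=X\otimes Y-Y\otimes X$. *)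

theory Defs
  imports Complex_Main
begin

text \<open>The two-photon Lie algebra h6 over the reals, in coordinates with respect to
  the basis N, A+, A-, B+, B-, M.\<close>

datatype basis = N | Ap | Am | Bp | Bm | M

type_synonym vec = "basis \<Rightarrow> real"
type_synonym tens2 = "basis \<Rightarrow> basis \<Rightarrow> real"
type_synonym tens3 = "basis \<Rightarrow> basis \<Rightarrow> basis \<Rightarrow> real"

lemma UNIV_basis: "(UNIV :: basis set) = {N, Ap, Am, Bp, Bm, M}"
  using basis.exhaust by auto

instance basis :: finite
  by standard (simp add: UNIV_basis)

definition ev :: "basis \<Rightarrow> vec" where
  "ev b = (\<lambda>k. if k = b then 1 else 0)"

text \<open>The listed brackets [X,Y] of basis elements (one orientation each).\<close>
fun pos :: "basis \<Rightarrow> basis \<Rightarrow> vec" where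
  "pos N Ap = ev Ap"
| "pos N Am = (\<lambda>k. - ev Am k)"
| "pos Am Ap = ev M"
| "pos N Bp = (\<lambda>k. 2 * ev Bp k)"
| "pos N Bm = (\<lambda>k. -2 * ev Bm k)"
| "pos Bm Bp = (\<lambda>k. 4 * ev N k + 2 * ev M k)"
| "pos Ap Bm = (\<lambda>k. -2 * ev Am k)"
| "pos Am Bp = (\<lambda>k. 2 * ev Ap k)"
| "pos _ _ = (\<lambda>k. 0)"

definition sc :: "basis \<Rightarrow> basis \<Rightarrow> basis \<Rightarrow> real" where
  "sc a b k = pos a b k - pos b a k"

definition lie :: "vec \<Rightarrow> vec \<Rightarrow> vec" where
  "lie x y = (\<lambda>k. \<Sum>a\<in>UNIV. \<Sum>b\<in>UNIV. x a * y b * sc a b k)"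

definition wedge :: "vec \<Rightarrow> vec \<Rightarrow> tens2" where
  "wedge x y = (\<lambda>i j. x i * y j - y i * x j)"

text \<open>[1 \<otimes> X + X \<otimes> 1, t] for t in g \<otimes> g (adjoint action).\<close>
definition ad2 :: "vec \<Rightarrow> tens2 \<Rightarrow> tens2" where
  "ad2 x t = (\<lambda>i j. (\<Sum>k\<in>UNIV. t k j * lie x (ev k) i) + (\<Sum>l\<in>UNIV. t i l * lie x (ev l) j))"

definition ad3 :: "vec \<Rightarrow> tens3 \<Rightarrow> tens3" where
  "ad3 x t = (\<lambda>i j k. (\<Sum>a\<in>UNIV. t a j k * lie x (ev a) i) + (\<Sum>a\<in>UNIV. t i a k * lie x (ev a) j)
                     + (\<Sum>a\<in>UNIV. t i j a * lie x (ev a) k))"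

text \<open>Schouten bracket [[r,r]] = [r12,r13] + [r12,r23] + [r13,r23].\<close>
definition schouten :: "tens2 \<Rightarrow> tens3" where
  "schouten r = (\<lambda>i j k.
      (\<Sum>a\<in>UNIV. \<Sum>c\<in>UNIV. r a j * r c k * sc a c i)
    + (\<Sum>b\<in>UNIV. \<Sum>c\<in>UNIV. r i b * r c k * sc b c j)
    + (\<Sum>b\<in>UNIV. \<Sum>d\<in>UNIV. r i b * r j d * sc b d k))"

definition lin2 :: "(vec \<Rightarrow> tens2) \<Rightarrow> bool" where
  "lin2 \<delta> \<longleftrightarrow> (\<forall>x y. \<delta> (\<lambda>k. x k + y k) = (\<lambda>i j. \<delta> x i j + \<delta> y i j))
             \<and> (\<forall>c x. \<delta> (\<lambda>k. c * x k) = (\<lambda>i j. c * \<delta> x i j))"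

text \<open>1-cocycle condition:
  \<delta>([X,Y]) = [\<delta>(X), 1\<otimes>Y + Y\<otimes>1] + [1\<otimes>X + X\<otimes>1, \<delta>(Y)].\<close>
definition cocycle :: "(vec \<Rightarrow> tens2) \<Rightarrow> bool" where
  "cocycle \<delta> \<longleftrightarrow> (\<forall>x y. \<delta> (lie x y) = (\<lambda>i j. - ad2 y (\<delta> x) i j + ad2 x (\<delta> y) i j))"

text \<open>The dual map g* \<otimes> g* \<rightarrow> g*, (\<xi>,\<eta>) \<mapsto> (\<xi> \<otimes> \<eta>) \<circ> \<delta>, in coordinates w.r.t. the dual basis.\<close>
definition dual_br :: "(vec \<Rightarrow> tens2) \<Rightarrow> vec \<Rightarrow> vec \<Rightarrow> vec" where
  "dual_br \<delta> \<xi> \<eta> = (\<lambda>k. \<Sum>i\<in>UNIV. \<Sum>j\<in>UNIV. \<xi> i * \<eta> j * \<delta> (ev k) i j)"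

definition dual_is_lie :: "(vec \<Rightarrow> tens2) \<Rightarrow> bool" where
  "dual_is_lie \<delta> \<longleftrightarrow>
     (\<forall>\<xi>. dual_br \<delta> \<xi> \<xi> = (\<lambda>k. 0))
   \<and> (\<forall>\<xi> \<eta> \<zeta>. (\<lambda>k. dual_br \<delta> \<xi> (dual_br \<delta> \<eta> \<zeta>) k + dual_br \<delta> \<eta> (dual_br \<delta> \<zeta> \<xi>) k
                    + dual_br \<delta> \<zeta> (dual_br \<delta> \<xi> \<eta>) k) = (\<lambda>k. 0))"

definition lie_bialgebra :: "(vec \<Rightarrow> tens2) \<Rightarrow> bool" where
  "lie_bialgebra \<delta> \<longleftrightarrow> lin2 \<delta> \<and> cocycle \<delta> \<and> dual_is_lie \<delta>"

definition tadd :: "tens2 \<Rightarrow> tens2 \<Rightarrow> tens2" (infixl "\<oplus>\<^sub>t" 65) where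
  "tadd s t = (\<lambda>i j. s i j + t i j)"
definition tsub :: "tens2 \<Rightarrow> tens2 \<Rightarrow> tens2" (infixl "\<ominus>\<^sub>t" 65) where
  "tsub s t = (\<lambda>i j. s i j - t i j)"
definition tsc :: "real \<Rightarrow> tens2 \<Rightarrow> tens2" (infixr "\<cdot>\<^sub>t" 75) where
  "tsc c t = (\<lambda>i j. c * t i j)"

definition rmat :: "real \<Rightarrow> real \<Rightarrow> real \<Rightarrow> real \<Rightarrow> real \<Rightarrow> real \<Rightarrow> tens2" where
  "rmat a1 a3 a4 a5 b3 c1 =
      a1 \<cdot>\<^sub>t wedge (ev N) (ev Ap) \<oplus>\<^sub>t a3 \<cdot>\<^sub>t wedge (ev Ap) (ev M) \<oplus>\<^sub>t a4 \<cdot>\<^sub>t wedge (ev Bp) (ev M)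
   \<oplus>\<^sub>t a5 \<cdot>\<^sub>t wedge (ev Ap) (ev Bp) \<oplus>\<^sub>t b3 \<cdot>\<^sub>t wedge (ev Am) (ev M)
   \<oplus>\<^sub>t c1 \<cdot>\<^sub>t (wedge (ev N) (ev M) \<ominus>\<^sub>t wedge (ev Ap) (ev Am))"

end

theory Submission
  imports Defs
begin

(* N is a grading element: ad N is diagonal, with weights 0, 1, -1, 2, -2, 0 on N, A+, A-, B+,
   B-, M.  The skew A+-invariant tensors are exactly the six-parameter family rmat.  If
   delta(A+) = 0, the cocycle identity with A+ makes delta(N) A+-invariant, so
   delta(N) = [N (x) 1 + 1 (x) N, r] for some r = rmat(...) whose c1 is still free; c1 is fixed
   by delta(A-).  The difference of delta and the coboundary of r is a cocycle E vanishing on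
   A+ and N.  The cocycle identity with N makes each E(X) homogeneous of the weight of X,
   centrality of M kills E(M), and A+-invariance leaves no room for E(A-), E(B-), E(B+).  So
   delta is a coboundary, and it is a Lie bialgebra iff the dual bracket satisfies Jacobi, which
   for r = rmat means a1 a4 + a5 c1 = 0.  Under that constraint
   [[r,r]] = (a1 b3 - c1^2) A+ ^ A- ^ M, which is ad-invariant. *)

lemma sum_UNIV_basis: "(\<Sum>x\<in>UNIV. f x) = f N + f Ap + f Am + f Bp + f Bm + f M"
  by (simp add: UNIV_basis add.assoc)

lemma all_basis: "(\<forall>x. P x) \<longleftrightarrow> P N \<and> P Ap \<and> P Am \<and> P Bp \<and> P Bm \<and> P M"
  by (metis basis.exhaust)

lemma ev_apply: "ev a b = (if b = a then 1 else 0)"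
  by (simp add: ev_def)

lemmas tensor_simps = tadd_def tsub_def tsc_def wedge_def ev_apply

lemma lie_ev: "lie x (ev b) i = (\<Sum>a\<in>UNIV. x a * sc a b i)"
  by (cases b) (simp_all add: lie_def ev_apply sum_UNIV_basis)

lemma lie_ev_ev: "lie (ev a) (ev b) = sc a b"
  by (cases a) (simp_all add: fun_eq_iff lie_ev ev_apply sum_UNIV_basis)

lemma ad2_ev: "ad2 (ev a) t i j = (\<Sum>k\<in>UNIV. t k j * sc a k i) + (\<Sum>l\<in>UNIV. t i l * sc a l j)"
  by (simp add: ad2_def lie_ev_ev)

lemma ad2_zero: "ad2 x (\<lambda>i j. 0) = (\<lambda>i j. 0)"
  by (simp add: ad2_def fun_eq_iff)

lemma ad2_expand: "ad2 X t i j = (\<Sum>b\<in>UNIV. X b * ad2 (ev b) t i j)"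
  by (simp add: ad2_def lie_ev ev_apply sum_UNIV_basis algebra_simps)

definition weight :: "basis \<Rightarrow> real" where
  "weight b = (case b of N \<Rightarrow> 0 | Ap \<Rightarrow> 1 | Am \<Rightarrow> -1 | Bp \<Rightarrow> 2 | Bm \<Rightarrow> -2 | M \<Rightarrow> 0)"

lemma sc_N: "sc N b k = (if k = b then weight b else 0)"
  by (cases b; cases k) (simp_all add: sc_def ev_def weight_def)

lemma ad2_N: "ad2 (ev N) t i j = (weight i + weight j) * t i j"
  by (simp add: ad2_ev sc_N sum_UNIV_basis) (cases i; cases j; simp add: algebra_simps)

lemma ad2_M: "ad2 (ev M) t = (\<lambda>i j. 0)"
  by (simp add: fun_eq_iff ad2_ev sc_def)

(* The Jacobi identity of h6, checked on the structure constants. *)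
lemma lie_lie_ev:
  "lie (lie x y) (ev k) i = (\<Sum>m\<in>UNIV. lie x (ev m) i * lie y (ev k) m - lie y (ev m) i * lie x (ev k) m)"
  unfolding lie_ev
  by (cases k; cases i; simp add: lie_def sum_UNIV_basis sc_def ev_def algebra_simps)

lemma ad2_lie: "ad2 (lie x y) t i j = ad2 x (ad2 y t) i j - ad2 y (ad2 x t) i j"
  unfolding ad2_def lie_lie_ev by (simp add: sum_UNIV_basis algebra_simps)

lemma lin2_expand:
  assumes "lin2 \<delta>"
  shows "\<delta> X = (\<lambda>i j. \<Sum>b\<in>UNIV. X b * \<delta> (ev b) i j)"
proof -
  have add: "\<And>x y. \<delta> (\<lambda>k. x k + y k) = (\<lambda>i j. \<delta> x i j + \<delta> y i j)"
    and smult: "\<And>c x. \<delta> (\<lambda>k. c * x k) = (\<lambda>i j. c * \<delta> x i j)"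
    using assms unfolding lin2_def by blast+
  have expand_finite:
    "\<delta> (\<lambda>k. \<Sum>b\<in>S. X b * ev b k) = (\<lambda>i j. \<Sum>b\<in>S. X b * \<delta> (ev b) i j)" if "finite S" for S
    using that
  proof (induction S rule: finite_induct)
    case empty
    show ?case
      using smult[of 0 X] by simp
  next
    case (insert c S)
    have "\<delta> (\<lambda>k. \<Sum>b\<in>insert c S. X b * ev b k) = \<delta> (\<lambda>k. X c * ev c k + (\<Sum>b\<in>S. X b * ev b k))"
      using insert.hyps by simp
    also have "\<dots> = (\<lambda>i j. X c * \<delta> (ev c) i j + \<delta> (\<lambda>k. \<Sum>b\<in>S. X b * ev b k) i j)"
      by (simp only: add smult)
    finally show ?case
      using insert.hyps by (simp add: insert.IH)
  qed
  have "(\<lambda>k. \<Sum>b\<in>UNIV. X b * ev b k) = X"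
    by (rule ext, case_tac k) (simp_all add: sum_UNIV_basis ev_apply)
  with expand_finite[of UNIV] show ?thesis
    by simp
qed

lemma lin2_coboundary: "lin2 (\<lambda>X. ad2 X r)"
  unfolding lin2_def
proof (intro conjI allI)
  fix x y :: vec and c :: real
  show "ad2 (\<lambda>k. x k + y k) r = (\<lambda>i j. ad2 x r i j + ad2 y r i j)"
    by (simp add: fun_eq_iff ad2_expand[of "\<lambda>k. x k + y k"] ad2_expand[of x] ad2_expand[of y]
        distrib_right sum.distrib)
  show "ad2 (\<lambda>k. c * x k) r = (\<lambda>i j. c * ad2 x r i j)"
    by (simp add: fun_eq_iff ad2_expand[of "\<lambda>k. c * x k"] ad2_expand[of x] sum_distrib_left mult.assoc)
qed

lemma cocycle_coboundary: "cocycle (\<lambda>X. ad2 X r)"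
  by (simp add: cocycle_def fun_eq_iff ad2_lie)

definition skew :: "tens2 \<Rightarrow> bool" where
  "skew t \<longleftrightarrow> (\<forall>i j. t i j = - t j i)"

lemma skew_diff:
  assumes "skew s" and "skew t"
  shows "skew (\<lambda>i j. s i j - t i j)"
  using assms unfolding skew_def by (smt (verit))

lemma skew_ad2:
  assumes "skew t"
  shows "skew (ad2 x t)"
proof -
  have t: "t k l = - t l k" for k l
    using assms unfolding skew_def by blast
  have sums: "(\<Sum>k\<in>UNIV. t k b * lie x (ev k) a) = - (\<Sum>k\<in>UNIV. t b k * lie x (ev k) a)" for a b
    by (subst t) (simp add: sum_negf)
  show ?thesis
    unfolding skew_def ad2_def by (simp add: sums)
qed

definition basis_cocycle :: "(basis \<Rightarrow> tens2) \<Rightarrow> bool" where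
  "basis_cocycle D \<longleftrightarrow>
     (\<forall>a b i j. (\<Sum>k\<in>UNIV. sc a b k * D k i j) = ad2 (ev a) (D b) i j - ad2 (ev b) (D a) i j)"

lemma basis_cocycle_of_cocycle:
  assumes "lin2 \<delta>" and "cocycle \<delta>"
  shows "basis_cocycle (\<lambda>b. \<delta> (ev b))"
  unfolding basis_cocycle_def
proof (intro allI)
  fix a b i j
  have "\<delta> (lie (ev a) (ev b)) i j = ad2 (ev a) (\<delta> (ev b)) i j - ad2 (ev b) (\<delta> (ev a)) i j"
    using \<open>cocycle \<delta>\<close> by (simp add: cocycle_def)
  then show "(\<Sum>k\<in>UNIV. sc a b k * \<delta> (ev k) i j) = ad2 (ev a) (\<delta> (ev b)) i j - ad2 (ev b) (\<delta> (ev a)) i j"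
    using lin2_expand[OF \<open>lin2 \<delta>\<close>, of "lie (ev a) (ev b)"] by (simp add: lie_ev_ev)
qed

lemma basis_cocycle_coboundary: "basis_cocycle (\<lambda>b. ad2 (ev b) r)"
  using basis_cocycle_of_cocycle[OF lin2_coboundary cocycle_coboundary] .

lemma basis_cocycle_diff:
  assumes "basis_cocycle D" and "basis_cocycle D'"
  shows "basis_cocycle (\<lambda>b i j. D b i j - D' b i j)"
proof -
  have "ad2 x (\<lambda>i j. s i j - t i j) i j = ad2 x s i j - ad2 x t i j" for x s t i j
    by (simp add: ad2_def sum_subtractf algebra_simps)
  with assms show ?thesis
    unfolding basis_cocycle_def by (simp add: right_diff_distrib sum_subtractf)
qed

lemma basis_cocycle_grading:
  assumes "basis_cocycle D"
  shows "weight b * D b i j = (weight i + weight j) * D b i j - ad2 (ev b) (D N) i j"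
proof -
  have "(\<Sum>k\<in>UNIV. sc N b k * D k i j) = weight b * D b i j"
    by (cases b) (simp_all add: sc_N sum_UNIV_basis)
  then show ?thesis
    using assms[unfolded basis_cocycle_def, rule_format, of N b i j] by (simp add: ad2_N)
qed

lemma basis_cocycle_central:
  assumes "basis_cocycle D"
  shows "ad2 (ev a) (D M) = (\<lambda>i j. 0)"
proof (intro ext)
  fix i j
  have "sc a M = (\<lambda>k. 0)"
    by (cases a) (simp_all add: fun_eq_iff sc_def)
  then show "ad2 (ev a) (D M) i j = 0"
    using assms[unfolded basis_cocycle_def, rule_format, of a M i j] by (simp add: ad2_M)
qed

lemma rmat_apply:
  "rmat a1 a3 a4 a5 b3 c1 i j = (case (i, j) of
      (N, Ap) \<Rightarrow> a1 | (Ap, N) \<Rightarrow> - a1 | (Ap, M) \<Rightarrow> a3 | (M, Ap) \<Rightarrow> - a3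
    | (Bp, M) \<Rightarrow> a4 | (M, Bp) \<Rightarrow> - a4 | (Ap, Bp) \<Rightarrow> a5 | (Bp, Ap) \<Rightarrow> - a5
    | (Am, M) \<Rightarrow> b3 | (M, Am) \<Rightarrow> - b3 | (N, M) \<Rightarrow> c1 | (M, N) \<Rightarrow> - c1
    | (Ap, Am) \<Rightarrow> - c1 | (Am, Ap) \<Rightarrow> c1 | _ \<Rightarrow> 0)"
  by (cases i; cases j; simp add: rmat_def tensor_simps)

lemma rmat_0: "rmat 0 0 0 0 0 0 = (\<lambda>i j. 0)"
  by (simp add: fun_eq_iff all_basis rmat_apply)

lemma skew_rmat: "skew (rmat a1 a3 a4 a5 b3 c1)"
  by (simp add: skew_def all_basis rmat_apply)

lemma ad2_rmat_apply:
  "ad2 (ev b) (rmat a1 a3 a4 a5 b3 c1) i j = (case b of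
      N \<Rightarrow> rmat a1 a3 (2 * a4) (3 * a5) (- b3) 0 i j
    | Am \<Rightarrow> rmat 0 (2 * a4) (- a5) 0 (2 * c1) a1 i j
    | Bp \<Rightarrow> rmat 0 (- 2 * b3) (- 2 * c1) (2 * a1) 0 0 i j
    | Bm \<Rightarrow> (case (i, j) of
          (N, Ap) \<Rightarrow> - 4 * a5 | (Ap, N) \<Rightarrow> 4 * a5 | (N, Am) \<Rightarrow> 2 * a1 | (Am, N) \<Rightarrow> - 2 * a1
        | (N, M) \<Rightarrow> 4 * a4 | (M, N) \<Rightarrow> - 4 * a4 | (Ap, Bm) \<Rightarrow> - 2 * a1 | (Bm, Ap) \<Rightarrow> 2 * a1
        | (Ap, M) \<Rightarrow> 2 * a5 | (M, Ap) \<Rightarrow> - 2 * a5 | (Am, Bp) \<Rightarrow> 2 * a5 | (Bp, Am) \<Rightarrow> - 2 * a5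
        | (Am, M) \<Rightarrow> 2 * a3 | (M, Am) \<Rightarrow> - 2 * a3 | (Bm, M) \<Rightarrow> 2 * c1 | (M, Bm) \<Rightarrow> - 2 * c1
        | _ \<Rightarrow> 0)
    | _ \<Rightarrow> 0)"
  by (cases b; cases i; cases j; simp add: ad2_ev sum_UNIV_basis sc_def rmat_apply ev_apply)

lemma ad2_Ap_rmat: "ad2 (ev Ap) (rmat a1 a3 a4 a5 b3 c1) = (\<lambda>i j. 0)"
  by (simp add: fun_eq_iff ad2_rmat_apply)

lemma Ap_invariant_eq_rmat:
  assumes "skew t" and "ad2 (ev Ap) t = (\<lambda>i j. 0)"
  shows "t = rmat (t N Ap) (t Ap M) (t Bp M) (t Ap Bp) (t Am M) (t N M)"
proof (intro ext)
  fix i j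
  have inv: "ad2 (ev Ap) t x y = 0" for x y
    using assms(2) by simp
  have sk: "t x y = - t y x" for x y
    using assms(1) unfolding skew_def by blast
  then have diag: "t x x = 0" for x
    by (metis add.inverse_inverse add_eq_0_iff2 neg_equal_zero)
  show "t i j = rmat (t N Ap) (t Ap M) (t Bp M) (t Ap Bp) (t Am M) (t N M) i j"
    using inv[of N M] inv[of Ap Bp] inv[of Ap Bm] inv[of Ap M] inv[of Ap Am] inv[of M Bp]
      inv[of M Bm] inv[of Am Bp] inv[of M Am] sk[of i j] diag[of Am] diag[of i]
    by (cases i; cases j; simp add: rmat_apply ad2_ev sum_UNIV_basis sc_def ev_apply; linarith)
qed

lemma invariant_skew_eq_0:
  assumes "skew t" and inv: "\<And>a. ad2 (ev a) t = (\<lambda>i j. 0)"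
  shows "t = (\<lambda>i j. 0)"
proof -
  have t: "t = rmat (t N Ap) (t Ap M) (t Bp M) (t Ap Bp) (t Am M) (t N M)"
    using Ap_invariant_eq_rmat[OF \<open>skew t\<close> inv] .
  have graded: "(weight i + weight j) * t i j = 0" for i j
    using inv[of N] by (simp add: fun_eq_iff ad2_N)
  have "t N Ap = 0" "t Ap M = 0" "t Bp M = 0" "t Ap Bp = 0" "t Am M = 0"
    using graded[of N Ap] graded[of Ap M] graded[of Bp M] graded[of Ap Bp] graded[of Am M]
    by (simp_all add: weight_def)
  moreover have "ad2 (ev Bp) t Bp M = 0"
    using inv[of Bp] by simp
  then have "t N M = 0"
    by (subst (asm) t) (simp add: ad2_rmat_apply rmat_apply)
  ultimately show ?thesis
    by (subst t) (simp add: rmat_0)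
qed

lemma basis_cocycle_homogeneous:
  assumes "basis_cocycle D" and "D N = (\<lambda>i j. 0)" and "weight b \<noteq> weight i + weight j"
  shows "D b i j = 0"
proof -
  have "(weight b - (weight i + weight j)) * D b i j = 0"
    using basis_cocycle_grading[OF assms(1), of b i j] by (simp add: assms(2) ad2_zero algebra_simps)
  with assms(3) show ?thesis
    by simp
qed

lemma basis_cocycle_intertwines_Ap:
  assumes "basis_cocycle D" and "D Ap = (\<lambda>i j. 0)"
  shows "ad2 (ev Ap) (D b) i j = (\<Sum>k\<in>UNIV. sc Ap b k * D k i j)"
  using assms(1)[unfolded basis_cocycle_def, rule_format, of Ap b i j] by (simp add: assms(2) ad2_zero)

lemma basis_cocycle_normalized_eq_0:
  assumes coc: "basis_cocycle E" and skew: "\<And>b. skew (E b)"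
    and E_Ap: "E Ap = (\<lambda>i j. 0)" and E_N: "E N = (\<lambda>i j. 0)" and "E Am Am M = 0"
  shows "E b = (\<lambda>i j. 0)"
proof -
  note graded = basis_cocycle_homogeneous[OF coc E_N]
  note intertwine = basis_cocycle_intertwines_Ap[OF coc E_Ap]
  have E_M: "E M = (\<lambda>i j. 0)"
    using invariant_skew_eq_0[OF skew basis_cocycle_central[OF coc]] .
  have "ad2 (ev Ap) (E Am) = (\<lambda>i j. 0)"
    using intertwine[of Am] by (simp add: fun_eq_iff sum_UNIV_basis sc_def ev_apply E_M)
  from Ap_invariant_eq_rmat[OF skew this] have E_Am: "E Am = (\<lambda>i j. 0)"
    using graded[of Am] \<open>E Am Am M = 0\<close> by (simp add: weight_def rmat_0)
  have "ad2 (ev Ap) (E Bm) = (\<lambda>i j. 0)"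
    using intertwine[of Bm] by (simp add: fun_eq_iff sum_UNIV_basis sc_def ev_apply E_Am)
  from Ap_invariant_eq_rmat[OF skew this] have E_Bm: "E Bm = (\<lambda>i j. 0)"
    using graded[of Bm] by (simp add: weight_def rmat_0)
  have "ad2 (ev Ap) (E Bp) = (\<lambda>i j. 0)"
    using intertwine[of Bp] by (simp add: fun_eq_iff sum_UNIV_basis sc_def ev_apply)
  from Ap_invariant_eq_rmat[OF skew this] have E_Bp_eq: "E Bp = rmat 0 0 (E Bp Bp M) 0 0 0"
    using graded[of Bp] by (simp add: weight_def)
  have "(\<Sum>k\<in>UNIV. sc Am Bp k * E k Ap M) = ad2 (ev Am) (E Bp) Ap M - ad2 (ev Bp) (E Am) Ap M"
    using coc unfolding basis_cocycle_def by blast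
  then have "ad2 (ev Am) (E Bp) Ap M = 0"
    by (simp add: sum_UNIV_basis sc_def ev_apply E_Ap E_Am ad2_zero)
  then have "E Bp Bp M = 0"
    by (subst (asm) E_Bp_eq) (simp add: ad2_rmat_apply rmat_apply)
  with E_Bp_eq have E_Bp: "E Bp = (\<lambda>i j. 0)"
    by (simp add: rmat_0)
  show ?thesis
    using E_N E_Ap E_Am E_Bp E_Bm E_M by (cases b) simp_all
qed

(* The parameters of r are read off from D N = [N (x) 1 + 1 (x) N, r], which scales the five
   terms of r of nonzero weight by 1, 1, 2, 3, -1, and from the coefficient 2 c1 of A- ^ M in D Am. *)
lemma basis_cocycle_eq_coboundary:
  assumes coc: "basis_cocycle D" and skew: "\<And>b. skew (D b)" and D_Ap: "D Ap = (\<lambda>i j. 0)"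
  defines "r \<equiv> rmat (D N N Ap) (D N Ap M) (D N Bp M / 2) (D N Ap Bp / 3) (- D N Am M) (D Am Am M / 2)"
  shows "D b = ad2 (ev b) r"
proof -
  have "ad2 (ev Ap) (D N) = (\<lambda>i j. 0)"
    using basis_cocycle_intertwines_Ap[OF coc D_Ap, of N]
    by (simp add: fun_eq_iff sum_UNIV_basis sc_def ev_apply D_Ap)
  then have D_N: "D N = rmat (D N N Ap) (D N Ap M) (D N Bp M) (D N Ap Bp) (D N Am M) (D N N M)"
    by (rule Ap_invariant_eq_rmat[OF skew])
  have "ad2 (ev Bp) (D N) Bp M = 0"
    using basis_cocycle_grading[OF coc, of Bp Bp M] by (simp add: weight_def)
  then have "D N N M = 0"
    by (subst (asm) D_N) (simp add: ad2_rmat_apply rmat_apply)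
  define E where "E b i j = D b i j - ad2 (ev b) r i j" for b i j
  have "E b = (\<lambda>i j. 0)"
  proof (rule basis_cocycle_normalized_eq_0)
    show "basis_cocycle E"
      unfolding E_def by (rule basis_cocycle_diff[OF coc basis_cocycle_coboundary])
    show "skew (E b)" for b
      unfolding E_def r_def by (rule skew_diff[OF skew skew_ad2[OF skew_rmat]])
    show "E Ap = (\<lambda>i j. 0)"
      by (simp add: E_def r_def fun_eq_iff D_Ap ad2_Ap_rmat)
    show "E N = (\<lambda>i j. 0)"
    proof (intro ext)
      fix i j
      have "D N i j = rmat (D N N Ap) (D N Ap M) (D N Bp M) (D N Ap Bp) (D N Am M) (D N N M) i j"
        using D_N by simp
      then show "E N i j = 0"
        unfolding E_def r_def ad2_N using \<open>D N N M = 0\<close>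
        by (cases i; cases j; simp add: weight_def rmat_apply)
    qed
    show "E Am Am M = 0"
      by (simp add: E_def r_def ad2_rmat_apply rmat_apply)
  qed
  then show ?thesis
    by (simp add: E_def fun_eq_iff)
qed

(* The e^k-coefficient of [e^u, [e^v, e^w]] + cyclic for the dual bracket
   [e^u, e^v] = sum_k D k u v e^k. *)
definition dual_jacobiator :: "(basis \<Rightarrow> tens2) \<Rightarrow> basis \<Rightarrow> basis \<Rightarrow> basis \<Rightarrow> basis \<Rightarrow> real" where
  "dual_jacobiator D u v w k = (\<Sum>j\<in>UNIV. D j v w * D k u j + D j w u * D k v j + D j u v * D k w j)"

lemma sum_ev_mult: "(\<Sum>j\<in>UNIV. ev a j * f j) = f a"
  by (cases a) (simp_all add: sum_UNIV_basis ev_apply)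

lemma dual_br_ev: "dual_br \<delta> (ev i) \<eta> k = (\<Sum>j\<in>UNIV. \<eta> j * \<delta> (ev k) i j)"
  by (cases i) (simp_all add: dual_br_def sum_UNIV_basis ev_apply)

lemma dual_br_ev_ev: "dual_br \<delta> (ev i) (ev j) k = \<delta> (ev k) i j"
  by (cases j) (simp_all add: dual_br_ev sum_UNIV_basis ev_apply)

lemma dual_br_add_left: "dual_br \<delta> (\<lambda>x. \<xi> x + \<eta> x) \<zeta> k = dual_br \<delta> \<xi> \<zeta> k + dual_br \<delta> \<eta> \<zeta> k"
  by (simp add: dual_br_def distrib_right sum.distrib)

lemma dual_br_add_right: "dual_br \<delta> \<zeta> (\<lambda>x. \<xi> x + \<eta> x) k = dual_br \<delta> \<zeta> \<xi> k + dual_br \<delta> \<zeta> \<eta> k"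
  by (simp add: dual_br_def distrib_left distrib_right sum.distrib)

lemma sum_rotate3:
  "(\<Sum>u\<in>A. \<Sum>v\<in>B. \<Sum>w\<in>C. f u v w) = (\<Sum>v\<in>B. \<Sum>w\<in>C. \<Sum>u\<in>A. f u v w)"
  by (subst sum.swap) (simp add: sum.swap[of _ _ A])

lemma dual_br_dual_br:
  "dual_br \<delta> \<xi> (dual_br \<delta> \<eta> \<zeta>) k =
     (\<Sum>u\<in>UNIV. \<Sum>v\<in>UNIV. \<Sum>w\<in>UNIV. \<xi> u * \<eta> v * \<zeta> w * (\<Sum>j\<in>UNIV. \<delta> (ev j) v w * \<delta> (ev k) u j))"
proof -
  have "dual_br \<delta> \<xi> (dual_br \<delta> \<eta> \<zeta>) k =
     (\<Sum>u\<in>UNIV. \<Sum>j\<in>UNIV. \<Sum>v\<in>UNIV. \<Sum>w\<in>UNIV. \<xi> u * \<eta> v * \<zeta> w * (\<delta> (ev j) v w * \<delta> (ev k) u j))"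
    by (simp add: dual_br_def sum_distrib_left sum_distrib_right mult_ac)
  also have "\<dots> = (\<Sum>u\<in>UNIV. \<Sum>v\<in>UNIV. \<Sum>w\<in>UNIV. \<Sum>j\<in>UNIV. \<xi> u * \<eta> v * \<zeta> w * (\<delta> (ev j) v w * \<delta> (ev k) u j))"
    by (intro sum.cong refl sum_rotate3)
  also have "\<dots> = (\<Sum>u\<in>UNIV. \<Sum>v\<in>UNIV. \<Sum>w\<in>UNIV. \<xi> u * \<eta> v * \<zeta> w * (\<Sum>j\<in>UNIV. \<delta> (ev j) v w * \<delta> (ev k) u j))"
    by (simp only: sum_distrib_left)
  finally show ?thesis .
qed

lemma dual_br_cyclic_sum:
  "dual_br \<delta> \<xi> (dual_br \<delta> \<eta> \<zeta>) k + dual_br \<delta> \<eta> (dual_br \<delta> \<zeta> \<xi>) k + dual_br \<delta> \<zeta> (dual_br \<delta> \<xi> \<eta>) k =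
     (\<Sum>u\<in>UNIV. \<Sum>v\<in>UNIV. \<Sum>w\<in>UNIV. \<xi> u * \<eta> v * \<zeta> w * dual_jacobiator (\<lambda>b. \<delta> (ev b)) u v w k)"
proof -
  define G where "G u v w = (\<Sum>j\<in>UNIV. \<delta> (ev j) v w * \<delta> (ev k) u j)" for u v w
  have first: "dual_br \<delta> \<xi> (dual_br \<delta> \<eta> \<zeta>) k = (\<Sum>u\<in>UNIV. \<Sum>v\<in>UNIV. \<Sum>w\<in>UNIV. \<xi> u * \<eta> v * \<zeta> w * G u v w)"
    by (simp add: dual_br_dual_br G_def)
  have "dual_br \<delta> \<eta> (dual_br \<delta> \<zeta> \<xi>) k = (\<Sum>w\<in>UNIV. \<Sum>u\<in>UNIV. \<Sum>v\<in>UNIV. \<eta> w * \<zeta> u * \<xi> v * G w u v)"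
    by (simp add: dual_br_dual_br G_def)
  also have "\<dots> = (\<Sum>u\<in>UNIV. \<Sum>v\<in>UNIV. \<Sum>w\<in>UNIV. \<xi> u * \<eta> v * \<zeta> w * G v w u)"
    by (subst sum_rotate3) (simp add: mult_ac)
  finally have second: "dual_br \<delta> \<eta> (dual_br \<delta> \<zeta> \<xi>) k = \<dots>" .
  have "dual_br \<delta> \<zeta> (dual_br \<delta> \<xi> \<eta>) k = (\<Sum>v\<in>UNIV. \<Sum>w\<in>UNIV. \<Sum>u\<in>UNIV. \<zeta> v * \<xi> w * \<eta> u * G v w u)"
    by (simp add: dual_br_dual_br G_def)
  also have "\<dots> = (\<Sum>u\<in>UNIV. \<Sum>v\<in>UNIV. \<Sum>w\<in>UNIV. \<xi> u * \<eta> v * \<zeta> w * G w u v)"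
    by (subst sum_rotate3[symmetric]) (simp add: mult_ac)
  finally have third: "dual_br \<delta> \<zeta> (dual_br \<delta> \<xi> \<eta>) k = \<dots>" .
  have "dual_jacobiator (\<lambda>b. \<delta> (ev b)) u v w k = G u v w + G v w u + G w u v" for u v w
    by (simp add: dual_jacobiator_def G_def sum.distrib)
  then show ?thesis
    unfolding first second third by (simp add: distrib_left sum.distrib)
qed

lemma dual_br_alternating_iff_skew:
  "(\<forall>\<xi>. dual_br \<delta> \<xi> \<xi> = (\<lambda>k. 0)) \<longleftrightarrow> (\<forall>k. skew (\<delta> (ev k)))"
proof
  assume alt: "\<forall>\<xi>. dual_br \<delta> \<xi> \<xi> = (\<lambda>k. 0)"
  show "\<forall>k. skew (\<delta> (ev k))"
    unfolding skew_def
  proof (intro allI)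
    fix k i j
    have "dual_br \<delta> (\<lambda>x. ev i x + ev j x) (\<lambda>x. ev i x + ev j x) k = 0"
      and "dual_br \<delta> (ev i) (ev i) k = 0" and "dual_br \<delta> (ev j) (ev j) k = 0"
      using alt by simp_all
    then show "\<delta> (ev k) i j = - \<delta> (ev k) j i"
      by (simp add: dual_br_add_left dual_br_add_right dual_br_ev_ev)
  qed
next
  assume skew: "\<forall>k. skew (\<delta> (ev k))"
  have "dual_br \<delta> \<xi> \<xi> k = 0" for \<xi> k
  proof -
    have s: "\<delta> (ev k) i j = - \<delta> (ev k) j i" for i j
      using skew unfolding skew_def by blast
    have "dual_br \<delta> \<xi> \<xi> k = (\<Sum>i\<in>UNIV. \<Sum>j\<in>UNIV. - (\<xi> j * \<xi> i * \<delta> (ev k) j i))"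
      unfolding dual_br_def by (intro sum.cong refl; subst s; simp add: mult_ac)
    also have "\<dots> = - dual_br \<delta> \<xi> \<xi> k"
      unfolding dual_br_def sum_negf by (subst sum.swap) (rule refl)
    finally show ?thesis
      by simp
  qed
  then show "\<forall>\<xi>. dual_br \<delta> \<xi> \<xi> = (\<lambda>k. 0)"
    by (simp add: fun_eq_iff)
qed

lemma dual_br_jacobi_iff:
  "(\<forall>\<xi> \<eta> \<zeta>. (\<lambda>k. dual_br \<delta> \<xi> (dual_br \<delta> \<eta> \<zeta>) k + dual_br \<delta> \<eta> (dual_br \<delta> \<zeta> \<xi>) k
                    + dual_br \<delta> \<zeta> (dual_br \<delta> \<xi> \<eta>) k) = (\<lambda>k. 0))
   \<longleftrightarrow> (\<forall>u v w k. dual_jacobiator (\<lambda>b. \<delta> (ev b)) u v w k = 0)"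
proof
  assume jacobi: "\<forall>\<xi> \<eta> \<zeta>. (\<lambda>k. dual_br \<delta> \<xi> (dual_br \<delta> \<eta> \<zeta>) k + dual_br \<delta> \<eta> (dual_br \<delta> \<zeta> \<xi>) k
                    + dual_br \<delta> \<zeta> (dual_br \<delta> \<xi> \<eta>) k) = (\<lambda>k. 0)"
  show "\<forall>u v w k. dual_jacobiator (\<lambda>b. \<delta> (ev b)) u v w k = 0"
  proof (intro allI)
    fix u v w k
    have "dual_br \<delta> (ev u) (dual_br \<delta> (ev v) (ev w)) k + dual_br \<delta> (ev v) (dual_br \<delta> (ev w) (ev u)) k
        + dual_br \<delta> (ev w) (dual_br \<delta> (ev u) (ev v)) k = 0"
      using fun_cong[OF jacobi[rule_format, of "ev u" "ev v" "ev w"], of k] by simp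
    then show "dual_jacobiator (\<lambda>b. \<delta> (ev b)) u v w k = 0"
      by (simp add: dual_jacobiator_def dual_br_ev dual_br_ev_ev sum_ev_mult sum.distrib)
  qed
qed (simp add: fun_eq_iff dual_br_cyclic_sum)

lemma dual_is_lie_iff:
  "dual_is_lie \<delta> \<longleftrightarrow>
     (\<forall>k. skew (\<delta> (ev k))) \<and> (\<forall>u v w k. dual_jacobiator (\<lambda>b. \<delta> (ev b)) u v w k = 0)"
  unfolding dual_is_lie_def dual_br_alternating_iff_skew dual_br_jacobi_iff ..

lemma dual_jacobiator_rmat_coboundary_N_Ap_M_Bm:
  "dual_jacobiator (\<lambda>b. ad2 (ev b) (rmat a1 a3 a4 a5 b3 c1)) N Ap M Bm = 8 * (a1 * a4 + a5 * c1)"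
  by (simp add: dual_jacobiator_def sum_UNIV_basis ad2_rmat_apply rmat_apply algebra_simps)

lemma dual_jacobiator_rmat_coboundary_eq_0:
  assumes "a1 * a4 + a5 * c1 = 0"
  shows "dual_jacobiator (\<lambda>b. ad2 (ev b) (rmat a1 a3 a4 a5 b3 c1)) u v w k = 0"
  unfolding dual_jacobiator_def sum_UNIV_basis
  by (cases k; cases u; cases v; cases w;
      simp add: ad2_rmat_apply rmat_apply mult.commute[of a4 a1] mult.commute[of c1 a5];
      use assms in linarith)

lemma lie_bialgebra_rmat_coboundary_iff:
  "lie_bialgebra (\<lambda>X. ad2 X (rmat a1 a3 a4 a5 b3 c1)) \<longleftrightarrow> a1 * a4 + a5 * c1 = 0"
  using dual_jacobiator_rmat_coboundary_N_Ap_M_Bm[of a1 a3 a4 a5 b3 c1]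
    dual_jacobiator_rmat_coboundary_eq_0[of a1 a4 a5 c1 a3 b3]
  by (auto simp: lie_bialgebra_def dual_is_lie_iff lin2_coboundary cocycle_coboundary skew_ad2 skew_rmat)

lemma lie_bialgebra_Ap_trivial_iff:
  "lie_bialgebra \<delta> \<and> \<delta> (ev Ap) = (\<lambda>i j. 0) \<longleftrightarrow>
     (\<exists>a1 a3 a4 a5 b3 c1. a1 * a4 + a5 * c1 = 0 \<and> (\<forall>X. \<delta> X = ad2 X (rmat a1 a3 a4 a5 b3 c1)))"
proof
  assume bialg: "lie_bialgebra \<delta> \<and> \<delta> (ev Ap) = (\<lambda>i j. 0)"
  then have lin: "lin2 \<delta>" and coc: "cocycle \<delta>" and skew: "\<And>b. skew (\<delta> (ev b))"
    by (auto simp: lie_bialgebra_def dual_is_lie_iff)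
  obtain a1 a3 a4 a5 b3 c1 where basis_eq: "\<And>b. \<delta> (ev b) = ad2 (ev b) (rmat a1 a3 a4 a5 b3 c1)"
    using basis_cocycle_eq_coboundary[OF basis_cocycle_of_cocycle[OF lin coc] skew] bialg by blast
  have "\<delta> X = ad2 X (rmat a1 a3 a4 a5 b3 c1)" for X
    by (simp add: lin2_expand[OF lin, of X] basis_eq fun_eq_iff ad2_expand[of X])
  moreover from this have "a1 * a4 + a5 * c1 = 0"
    using bialg lie_bialgebra_rmat_coboundary_iff by (metis ext)
  ultimately show "\<exists>a1 a3 a4 a5 b3 c1. a1 * a4 + a5 * c1 = 0 \<and> (\<forall>X. \<delta> X = ad2 X (rmat a1 a3 a4 a5 b3 c1))"
    by blast
next
  assume "\<exists>a1 a3 a4 a5 b3 c1. a1 * a4 + a5 * c1 = 0 \<and> (\<forall>X. \<delta> X = ad2 X (rmat a1 a3 a4 a5 b3 c1))"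
  then obtain a1 a3 a4 a5 b3 c1
    where "a1 * a4 + a5 * c1 = 0" and "\<delta> = (\<lambda>X. ad2 X (rmat a1 a3 a4 a5 b3 c1))"
    by blast
  then show "lie_bialgebra \<delta> \<and> \<delta> (ev Ap) = (\<lambda>i j. 0)"
    by (simp add: lie_bialgebra_rmat_coboundary_iff ad2_Ap_rmat)
qed

lemma ad2_N_rmat:
  "ad2 (ev N) (rmat a1 a3 a4 a5 b3 c1) = a1 \<cdot>\<^sub>t wedge (ev N) (ev Ap) \<oplus>\<^sub>t a3 \<cdot>\<^sub>t wedge (ev Ap) (ev M)
     \<oplus>\<^sub>t (2 * a4) \<cdot>\<^sub>t wedge (ev Bp) (ev M) \<oplus>\<^sub>t (3 * a5) \<cdot>\<^sub>t wedge (ev Ap) (ev Bp)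
     \<ominus>\<^sub>t b3 \<cdot>\<^sub>t wedge (ev Am) (ev M)"
  by (simp add: fun_eq_iff all_basis ad2_rmat_apply rmat_apply tensor_simps)

lemma ad2_Am_rmat:
  "ad2 (ev Am) (rmat a1 a3 a4 a5 b3 c1) = a1 \<cdot>\<^sub>t (wedge (ev N) (ev M) \<ominus>\<^sub>t wedge (ev Ap) (ev Am))
     \<oplus>\<^sub>t (2 * a4) \<cdot>\<^sub>t wedge (ev Ap) (ev M) \<ominus>\<^sub>t a5 \<cdot>\<^sub>t wedge (ev Bp) (ev M)
     \<oplus>\<^sub>t (2 * c1) \<cdot>\<^sub>t wedge (ev Am) (ev M)"
  by (simp add: fun_eq_iff all_basis ad2_rmat_apply rmat_apply tensor_simps)

lemma ad2_Bp_rmat: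
  "ad2 (ev Bp) (rmat a1 a3 a4 a5 b3 c1) = (2 * a1) \<cdot>\<^sub>t wedge (ev Ap) (ev Bp) \<ominus>\<^sub>t (2 * b3) \<cdot>\<^sub>t wedge (ev Ap) (ev M)
     \<ominus>\<^sub>t (2 * c1) \<cdot>\<^sub>t wedge (ev Bp) (ev M)"
  by (simp add: fun_eq_iff all_basis ad2_rmat_apply rmat_apply tensor_simps)

lemma ad2_Bm_rmat:
  "ad2 (ev Bm) (rmat a1 a3 a4 a5 b3 c1) = (2 * a1) \<cdot>\<^sub>t (wedge (ev N) (ev Am) \<ominus>\<^sub>t wedge (ev Ap) (ev Bm))
     \<oplus>\<^sub>t (2 * a3) \<cdot>\<^sub>t wedge (ev Am) (ev M) \<oplus>\<^sub>t (4 * a4) \<cdot>\<^sub>t wedge (ev N) (ev M)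
     \<ominus>\<^sub>t (2 * a5) \<cdot>\<^sub>t ((2::real) \<cdot>\<^sub>t wedge (ev N) (ev Ap) \<ominus>\<^sub>t wedge (ev Am) (ev Bp) \<ominus>\<^sub>t wedge (ev Ap) (ev M))
     \<oplus>\<^sub>t (2 * c1) \<cdot>\<^sub>t wedge (ev Bm) (ev M)"
  by (simp add: fun_eq_iff all_basis ad2_rmat_apply rmat_apply tensor_simps)

definition wedge3 :: "vec \<Rightarrow> vec \<Rightarrow> vec \<Rightarrow> tens3" where
  "wedge3 x y z = (\<lambda>i j k. x i * y j * z k - x i * z j * y k - y i * x j * z k
      + y i * z j * x k + z i * x j * y k - z i * y j * x k)"

lemma sum_sc_expand:
  "(\<Sum>a\<in>UNIV. \<Sum>c\<in>UNIV. g a c * sc a c k) =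
       (g N Ap - g Ap N + 2 * (g Am Bp - g Bp Am)) * ev Ap k
     - (g N Am - g Am N + 2 * (g Ap Bm - g Bm Ap)) * ev Am k
     + 2 * (g N Bp - g Bp N) * ev Bp k - 2 * (g N Bm - g Bm N) * ev Bm k
     + (g Bm Bp - g Bp Bm) * (4 * ev N k + 2 * ev M k) + (g Am Ap - g Ap Am) * ev M k"
  by (simp add: sum_UNIV_basis sc_def algebra_simps)

lemma schouten_rmat:
  "schouten (rmat a1 a3 a4 a5 b3 c1) = (\<lambda>i j k.
     (a1 * b3 - c1\<^sup>2) * wedge3 (ev Ap) (ev Am) (ev M) i j k
     - 2 * (a1 * a4 + a5 * c1) * wedge3 (ev Ap) (ev Bp) (ev M) i j k)"
  unfolding fun_eq_iff schouten_def sum_sc_expand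
  by (intro allI, case_tac x; case_tac xa; case_tac xb;
      simp add: rmat_apply ev_apply wedge3_def power2_eq_square algebra_simps)

lemma ad3_wedge3_Ap_Am_M: "ad3 X (wedge3 (ev Ap) (ev Am) (ev M)) = (\<lambda>i j k. 0)"
  unfolding fun_eq_iff ad3_def lie_ev
  by (intro allI, case_tac x; case_tac xa; case_tac xb; simp add: sum_UNIV_basis sc_def ev_apply wedge3_def)

lemma ad3_smult: "ad3 X (\<lambda>i j k. c * T i j k) = (\<lambda>i j k. c * ad3 X T i j k)"
  unfolding ad3_def by (simp add: sum_distrib_left algebra_simps)

lemma schouten_rmat_eq_0_iff:
  assumes "a1 * a4 + a5 * c1 = 0"
  shows "schouten (rmat a1 a3 a4 a5 b3 c1) = (\<lambda>i j k. 0) \<longleftrightarrow> a1 * b3 - c1 ^ 2 = 0"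
proof
  assume "schouten (rmat a1 a3 a4 a5 b3 c1) = (\<lambda>i j k. 0)"
  then have "schouten (rmat a1 a3 a4 a5 b3 c1) Ap Am M = 0"
    by simp
  then show "a1 * b3 - c1 ^ 2 = 0"
    using assms by (simp add: schouten_rmat wedge3_def ev_apply)
qed (simp add: schouten_rmat assms)

lemma ad3_schouten_rmat:
  assumes "a1 * a4 + a5 * c1 = 0"
  shows "ad3 X (schouten (rmat a1 a3 a4 a5 b3 c1)) = (\<lambda>i j k. 0)"
  by (simp add: schouten_rmat assms ad3_smult ad3_wedge3_Ap_Am_M)

theorem mainTheorem2:
  shows "(\<forall>\<delta>. (lie_bialgebra \<delta> \<and> \<delta> (ev Ap) = (\<lambda>i j. 0)) \<longleftrightarrow>
            (\<exists>a1 a3 a4 a5 b3 c1. a1 * a4 + a5 * c1 = 0 \<and>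
               (\<forall>X. \<delta> X = ad2 X (rmat a1 a3 a4 a5 b3 c1))))
   \<and> (\<forall>a1 a3 a4 a5 b3 c1. a1 * a4 + a5 * c1 = 0 \<longrightarrow>
        (let r = rmat a1 a3 a4 a5 b3 c1 in
          ad2 (ev Ap) r = (\<lambda>i j. 0) \<and> ad2 (ev M) r = (\<lambda>i j. 0)
        \<and> ad2 (ev N) r = a1 \<cdot>\<^sub>t wedge (ev N) (ev Ap) \<oplus>\<^sub>t a3 \<cdot>\<^sub>t wedge (ev Ap) (ev M)
             \<oplus>\<^sub>t (2 * a4) \<cdot>\<^sub>t wedge (ev Bp) (ev M) \<oplus>\<^sub>t (3 * a5) \<cdot>\<^sub>t wedge (ev Ap) (ev Bp)
             \<ominus>\<^sub>t b3 \<cdot>\<^sub>t wedge (ev Am) (ev M)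
        \<and> ad2 (ev Am) r = a1 \<cdot>\<^sub>t (wedge (ev N) (ev M) \<ominus>\<^sub>t wedge (ev Ap) (ev Am))
             \<oplus>\<^sub>t (2 * a4) \<cdot>\<^sub>t wedge (ev Ap) (ev M) \<ominus>\<^sub>t a5 \<cdot>\<^sub>t wedge (ev Bp) (ev M)
             \<oplus>\<^sub>t (2 * c1) \<cdot>\<^sub>t wedge (ev Am) (ev M)
        \<and> ad2 (ev Bp) r = (2 * a1) \<cdot>\<^sub>t wedge (ev Ap) (ev Bp) \<ominus>\<^sub>t (2 * b3) \<cdot>\<^sub>t wedge (ev Ap) (ev M)
             \<ominus>\<^sub>t (2 * c1) \<cdot>\<^sub>t wedge (ev Bp) (ev M)
        \<and> ad2 (ev Bm) r = (2 * a1) \<cdot>\<^sub>t (wedge (ev N) (ev Am) \<ominus>\<^sub>t wedge (ev Ap) (ev Bm))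
             \<oplus>\<^sub>t (2 * a3) \<cdot>\<^sub>t wedge (ev Am) (ev M) \<oplus>\<^sub>t (4 * a4) \<cdot>\<^sub>t wedge (ev N) (ev M)
             \<ominus>\<^sub>t (2 * a5) \<cdot>\<^sub>t ((2::real) \<cdot>\<^sub>t wedge (ev N) (ev Ap) \<ominus>\<^sub>t wedge (ev Am) (ev Bp)
                                  \<ominus>\<^sub>t wedge (ev Ap) (ev M))
             \<oplus>\<^sub>t (2 * c1) \<cdot>\<^sub>t wedge (ev Bm) (ev M)
        \<and> (schouten r = (\<lambda>i j k. 0) \<longleftrightarrow> a1 * b3 - c1 ^ 2 = 0)
        \<and> (\<forall>X. ad3 X (schouten r) = (\<lambda>i j k. 0))))"
  by (simp add: Let_def lie_bialgebra_Ap_trivial_iff ad2_Ap_rmat ad2_M ad2_N_rmat ad2_Am_rmat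
      ad2_Bp_rmat ad2_Bm_rmat schouten_rmat_eq_0_iff ad3_schouten_rmat)

end
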